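(* Let $\phi:F\langle z,y\rangle\to F\langle \alpha,\delta\rangle$ be the homomorphism of free groups with $\phi(z)=\alpha^4\delta^2$ and $\phi(y)=\delta^{-1}\alpha\delta$. Let $w=\dots y^{n_{k-1}}z^{n_k}$ or $w=\dots z^{n_{k-1}}y^{n_k}$ be a reduced word of length $k\ge1$ in alternating nonzero powers of $z$ and $y$ (all $n_i\neq0$). Then: (a) if $w$ ends in a nonzero power of $z$, the reduced form of $\phi(w)$ ends in either $\delta^{-1}\alpha^{-4}$ or $\alpha^4\delta^2$; (b) if $w$ ends in a nonzero power of $y$, the reduced form of $\phi(w)$ ends in $\alpha^n\delta$ for some $n\neq0$. *)

theory Defs
  imports Main "HOL-Library.Sublist"
begin

text \<open>Words in a free group over generators of type 'g: lists of letters (g, s),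
  where s = True means g and s = False means g inverse.\<close>

type_synonym 'g letter = "'g \<times> bool"

definition inv_letter :: "'g letter \<Rightarrow> 'g letter" where
  "inv_letter x = (fst x, \<not> snd x)"

definition inv_word :: "'g letter list \<Rightarrow> 'g letter list" where
  "inv_word xs = rev (map inv_letter xs)"

fun push_letter :: "'g letter \<Rightarrow> 'g letter list \<Rightarrow> 'g letter list" where
  "push_letter x [] = [x]"
| "push_letter x (y # ys) = (if y = inv_letter x then ys else x # y # ys)"

definition reduced_form :: "'g letter list \<Rightarrow> 'g letter list" where
  "reduced_form xs = foldr push_letter xs []"

definition reduced :: "'g letter list \<Rightarrow> bool" where
  "reduced xs \<longleftrightarrow> (\<forall>i. Suc i < length xs \<longrightarrow> xs ! Suc i \<noteq> inv_letter (xs ! i))"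

definition gpow :: "'g \<Rightarrow> int \<Rightarrow> 'g letter list" where
  "gpow g n = (if n \<ge> 0 then replicate (nat n) (g, True) else replicate (nat (- n)) (g, False))"

datatype zy = Z | Y
datatype ad = Alpha | Delta

definition phi_gen :: "zy \<Rightarrow> ad letter list" where
  "phi_gen g = (case g of
      Z \<Rightarrow> gpow Alpha 4 @ gpow Delta 2
    | Y \<Rightarrow> [(Delta, False), (Alpha, True), (Delta, True)])"

definition phi_letter :: "zy letter \<Rightarrow> ad letter list" where
  "phi_letter x = (if snd x then phi_gen (fst x) else inv_word (phi_gen (fst x)))"

definition phi_word :: "zy letter list \<Rightarrow> ad letter list" where
  "phi_word w = concat (map phi_letter w)"

definition syllables_word :: "('g \<times> int) list \<Rightarrow> 'g letter list" where
  "syllables_word ns = concat (map (\<lambda>(g, n). gpow g n) ns)"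

end

theory Submission
  imports Defs
begin

(* Reduction is computed right to left, one syllable at a time, as a stack. The images
   of y^n and z^n are \<delta>\<inverse> \<alpha>^n \<delta> and (\<alpha>^4 \<delta>^2)^n, so when the image of a syllable is
   pushed onto the reduced image of the syllables to its right, at most one letter cancels:
   the \<delta> ending the new block against a \<delta>\<inverse> on top of the stack. Hence the reduced image
   of a word starts with a prefix determined by its first syllable, and the suffix produced
   by the last syllable is never touched again. *)

abbreviation \<alpha> :: "ad letter" where "\<alpha> \<equiv> (Alpha, True)"
abbreviation \<alpha>' :: "ad letter" where "\<alpha>' \<equiv> (Alpha, False)"
abbreviation \<delta> :: "ad letter" where "\<delta> \<equiv> (Delta, True)"
abbreviation \<delta>' :: "ad letter" where "\<delta>' \<equiv> (Delta, False)"

lemma inv_letter_Pair [simp]: "inv_letter (g, b) = (g, \<not> b)"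
  by (simp add: inv_letter_def)

lemma push_letter_no_cancel:
  "st = [] \<or> hd st \<noteq> inv_letter x \<Longrightarrow> push_letter x st = x # st"
  by (cases st) auto

lemma foldr_push_letter_concat_replicate:
  assumes block: "\<And>st. st = [] \<or> hd st \<noteq> inv_letter (last B) \<Longrightarrow>
                          foldr push_letter B st = B @ st"
    and "B \<noteq> []" "hd B \<noteq> inv_letter (last B)"
    and "st = [] \<or> hd st \<noteq> inv_letter (last B)"
  shows "foldr push_letter (concat (replicate k B)) st = concat (replicate k B) @ st"
proof (induction k)
  case (Suc k)
  have "concat (replicate k B) @ st = [] \<or> hd (concat (replicate k B) @ st) \<noteq> inv_letter (last B)"
    using assms(2-4) by (cases k) auto
  then show ?case
    using Suc.IH block by simp
qed simp

lemma concat_replicate_Suc_right: "concat (replicate (Suc k) xs) = concat (replicate k xs) @ xs"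
  by (simp flip: replicate_append_same)

lemma gpow_eq_replicate: "gpow g n = replicate (nat \<bar>n\<bar>) (g, 0 \<le> n)"
  by (simp add: gpow_def)

lemma gpow_one [simp]: "gpow g 1 = [(g, True)]"
  by (simp add: gpow_def)

lemma gpow_neg_one [simp]: "gpow g (- 1) = [(g, False)]"
  by (simp add: gpow_def)

lemma gpow_numeral [simp]: "gpow g (numeral k) = replicate (numeral k) (g, True)"
  by (simp add: gpow_def)

lemma gpow_neg_numeral [simp]: "gpow g (- numeral k) = replicate (numeral k) (g, False)"
  by (simp add: gpow_def)

lemma phi_word_gpow: "phi_word (gpow g n) = concat (replicate (nat \<bar>n\<bar>) (phi_letter (g, 0 \<le> n)))"
  by (simp add: gpow_eq_replicate phi_word_def map_replicate)

lemma phi_word_gpow_nonzero: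
  assumes "n \<noteq> 0"
  obtains k where "phi_word (gpow g n) = phi_letter (g, 0 \<le> n) @ concat (replicate k (phi_letter (g, 0 \<le> n)))"
    and "phi_word (gpow g n) = concat (replicate k (phi_letter (g, 0 \<le> n))) @ phi_letter (g, 0 \<le> n)"
proof -
  obtain k where k: "nat \<bar>n\<bar> = Suc k"
    using assms by (metis nat_0_iff not0_implies_Suc zero_less_abs_iff not_le)
  have "phi_word (gpow g n) = phi_letter (g, 0 \<le> n) @ concat (replicate k (phi_letter (g, 0 \<le> n)))"
    by (simp only: phi_word_gpow k replicate_Suc concat.simps)
  moreover have "phi_word (gpow g n) = concat (replicate k (phi_letter (g, 0 \<le> n))) @ phi_letter (g, 0 \<le> n)"
    by (simp only: phi_word_gpow k concat_replicate_Suc_right)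
  ultimately show thesis
    by (rule that)
qed

lemma phi_letter_Y: "phi_letter (Y, b) = [\<delta>', (Alpha, b), \<delta>]"
  by (cases b) (simp_all add: phi_letter_def phi_gen_def inv_word_def)

lemma phi_letter_Z_pos: "phi_letter (Z, True) = [\<alpha>, \<alpha>, \<alpha>, \<alpha>, \<delta>, \<delta>]"
  by (simp add: phi_letter_def phi_gen_def gpow_def numeral_eq_Suc)

lemma phi_letter_Z_neg: "phi_letter (Z, False) = [\<delta>', \<delta>', \<alpha>', \<alpha>', \<alpha>', \<alpha>']"
  by (simp add: phi_letter_def phi_gen_def gpow_def numeral_eq_Suc inv_word_def)

lemma foldr_push_letter_Y_blocks:
  assumes "rest = [] \<or> hd rest \<noteq> inv_letter (Alpha, b)"
  shows "foldr push_letter (concat (replicate k (phi_letter (Y, b)))) (\<delta>' # rest)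
       = \<delta>' # replicate k (Alpha, b) @ rest"
proof (induction k)
  case (Suc k)
  have "replicate k (Alpha, b) @ rest = [] \<or> hd (replicate k (Alpha, b) @ rest) \<noteq> inv_letter (Alpha, b)"
    using assms by (cases k) auto
  then show ?case
    using Suc.IH by (simp add: phi_letter_Y push_letter_no_cancel)
qed simp

lemma push_Y_syllable_cancel:
  "rest = [] \<or> hd rest \<noteq> (Alpha, n < 0) \<Longrightarrow>
   foldr push_letter (phi_word (gpow Y n)) (\<delta>' # rest) = \<delta>' # gpow Alpha n @ rest"
  unfolding phi_word_gpow using foldr_push_letter_Y_blocks[of rest "0 \<le> n" "nat \<bar>n\<bar>"]
  by (simp add: gpow_eq_replicate not_le)

lemma push_Y_syllable:
  assumes "n \<noteq> 0" "st = [] \<or> hd st \<noteq> \<delta>'"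
  shows "foldr push_letter (phi_word (gpow Y n)) st = \<delta>' # gpow Alpha n @ \<delta> # st"
proof -
  obtain k where k: "nat \<bar>n\<bar> = Suc k"
    using assms(1) by (metis nat_0_iff not0_implies_Suc zero_less_abs_iff not_le)
  have "foldr push_letter (phi_letter (Y, 0 \<le> n)) st = \<delta>' # (Alpha, 0 \<le> n) # \<delta> # st"
    using assms(2) by (simp add: phi_letter_Y push_letter_no_cancel)
  then show ?thesis
    unfolding phi_word_gpow k concat_replicate_Suc_right
    using foldr_push_letter_Y_blocks[of "(Alpha, 0 \<le> n) # \<delta> # st" "0 \<le> n" k]
    by (simp add: gpow_eq_replicate k flip: replicate_append_same)
qed

lemma push_Z_blocks:
  "st = [] \<or> hd st \<noteq> inv_letter (last (phi_letter (Z, b))) \<Longrightarrow>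
   foldr push_letter (concat (replicate k (phi_letter (Z, b)))) st = concat (replicate k (phi_letter (Z, b))) @ st"
  by (rule foldr_push_letter_concat_replicate)
     (cases b; simp add: phi_letter_Z_pos phi_letter_Z_neg push_letter_no_cancel)+

lemma push_Z_pos_syllable:
  "0 < n \<Longrightarrow> st = [] \<or> hd st \<noteq> \<delta>' \<Longrightarrow>
   foldr push_letter (phi_word (gpow Z n)) st = phi_word (gpow Z n) @ st"
  unfolding phi_word_gpow by (rule push_Z_blocks) (simp add: phi_letter_Z_pos)

lemma push_Z_neg_syllable:
  "n < 0 \<Longrightarrow> st = [] \<or> hd st \<noteq> \<alpha> \<Longrightarrow>
   foldr push_letter (phi_word (gpow Z n)) st = phi_word (gpow Z n) @ st"
  unfolding phi_word_gpow by (rule push_Z_blocks) (simp add: phi_letter_Z_neg)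

lemma push_Z_syllable_cancel:
  assumes "0 < n" "rest = [] \<or> hd rest \<noteq> \<delta>'"
  shows "foldr push_letter (phi_word (gpow Z n)) (\<delta>' # rest) = butlast (phi_word (gpow Z n)) @ rest"
proof -
  obtain k where "phi_word (gpow Z n) = concat (replicate k (phi_letter (Z, 0 \<le> n))) @ phi_letter (Z, 0 \<le> n)"
    by (rule phi_word_gpow_nonzero[of n Z]) (use assms(1) in simp, blast)
  then obtain C where C: "C = concat (replicate k (phi_letter (Z, True)))"
    and word: "phi_word (gpow Z n) = C @ [\<alpha>, \<alpha>, \<alpha>, \<alpha>, \<delta>, \<delta>]"
    using assms(1) by (simp add: phi_letter_Z_pos)
  have "foldr push_letter [\<alpha>, \<alpha>, \<alpha>, \<alpha>, \<delta>, \<delta>] (\<delta>' # rest) = [\<alpha>, \<alpha>, \<alpha>, \<alpha>, \<delta>] @ rest"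
    using assms(2) by (simp add: push_letter_no_cancel)
  moreover have "foldr push_letter C ([\<alpha>, \<alpha>, \<alpha>, \<alpha>, \<delta>] @ rest) = C @ [\<alpha>, \<alpha>, \<alpha>, \<alpha>, \<delta>] @ rest"
    unfolding C by (rule push_Z_blocks) (simp add: phi_letter_Z_pos)
  ultimately show ?thesis
    by (simp add: word butlast_append)
qed

definition leading_word :: "zy \<times> int \<Rightarrow> ad letter list" where
  "leading_word p = (case p of
      (Y, n) \<Rightarrow> \<delta>' # gpow Alpha n
    | (Z, n) \<Rightarrow> if 0 < n then [\<alpha>, \<alpha>, \<alpha>, \<alpha>, \<delta>] else [\<delta>', \<delta>', \<alpha>', \<alpha>', \<alpha>', \<alpha>'])"

definition trailing_word :: "zy \<times> int \<Rightarrow> ad letter list" where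
  "trailing_word p = (case p of
      (Y, n) \<Rightarrow> gpow Alpha n @ gpow Delta 1
    | (Z, n) \<Rightarrow> if 0 < n then gpow Alpha 4 @ gpow Delta 2 else gpow Delta (-1) @ gpow Alpha (-4))"

(* The next syllable cancels at most the top letter of the stack, and only if it is \<delta>\<inverse>. *)
definition stable_suffix :: "ad letter list \<Rightarrow> ad letter list \<Rightarrow> bool" where
  "stable_suffix s st \<longleftrightarrow> suffix s st \<and> (hd st = \<delta>' \<longrightarrow> suffix s (tl st))"

lemma stable_suffix_append:
  "stable_suffix s st \<Longrightarrow> X \<noteq> [] \<Longrightarrow> stable_suffix s (X @ st)"
  unfolding stable_suffix_def by (cases X) (auto simp: suffix_def)

lemma stable_suffix_append_cancel:
  "stable_suffix s (\<delta>' # rest) \<Longrightarrow> X \<noteq> [] \<Longrightarrow> stable_suffix s (X @ rest)"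
  unfolding stable_suffix_def by (cases X) (auto simp: suffix_def)

definition reduced_image :: "(zy \<times> int) list \<Rightarrow> ad letter list" where
  "reduced_image ns = reduced_form (phi_word (syllables_word ns))"

lemma reduced_image_Nil: "reduced_image [] = []"
  by (simp add: reduced_image_def syllables_word_def phi_word_def reduced_form_def)

lemma reduced_image_Cons:
  "reduced_image (p # ns) = foldr push_letter (phi_word (gpow (fst p) (snd p))) (reduced_image ns)"
  by (cases p) (simp add: reduced_image_def syllables_word_def reduced_form_def phi_word_def)

lemma reduced_image_single:
  assumes "n \<noteq> 0"
  shows "prefix (leading_word (g, n)) (reduced_image [(g, n)])
       \<and> stable_suffix (trailing_word (g, n)) (reduced_image [(g, n)])"
proof -
  define B where "B = phi_letter (g, 0 \<le> n)"
  obtain C where word: "phi_word (gpow g n) = B @ C" "phi_word (gpow g n) = C @ B"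
    unfolding B_def by (rule phi_word_gpow_nonzero[OF assms])
  consider "g = Y" | "g = Z" "0 < n" | "g = Z" "n < 0"
    using assms by (cases g) fastforce+
  then show ?thesis
  proof cases
    case 1
    then have "reduced_image [(g, n)] = \<delta>' # gpow Alpha n @ [\<delta>]"
      using assms by (simp add: reduced_image_Cons reduced_image_Nil push_Y_syllable)
    then show ?thesis
      using 1 by (simp add: leading_word_def trailing_word_def stable_suffix_def suffix_ConsI)
  next
    case 2
    then have image: "reduced_image [(g, n)] = phi_word (gpow g n)"
      and B: "B = [\<alpha>, \<alpha>, \<alpha>, \<alpha>, \<delta>, \<delta>]"
      by (simp_all add: reduced_image_Cons reduced_image_Nil push_Z_pos_syllable B_def phi_letter_Z_pos)
    have "suffix B (reduced_image [(g, n)])"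
      unfolding image word(2) by (simp add: suffix_def)
    moreover have "prefix [\<alpha>, \<alpha>, \<alpha>, \<alpha>, \<delta>] (reduced_image [(g, n)])"
      and "hd (reduced_image [(g, n)]) = \<alpha>"
      unfolding image word(1) B by simp_all
    ultimately show ?thesis
      using 2 unfolding B
      by (simp add: leading_word_def trailing_word_def stable_suffix_def numeral_eq_Suc)
  next
    case 3
    then have image: "reduced_image [(g, n)] = phi_word (gpow g n)"
      and B: "B = [\<delta>', \<delta>', \<alpha>', \<alpha>', \<alpha>', \<alpha>']"
      by (simp_all add: reduced_image_Cons reduced_image_Nil push_Z_neg_syllable B_def phi_letter_Z_neg)
    have "suffix [\<delta>', \<alpha>', \<alpha>', \<alpha>', \<alpha>'] (reduced_image [(g, n)])"
      "suffix [\<delta>', \<alpha>', \<alpha>', \<alpha>', \<alpha>'] (tl (reduced_image [(g, n)]))"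
      unfolding image word(2) B by (cases C; simp add: suffix_def)+
    moreover have "prefix B (reduced_image [(g, n)])"
      unfolding image word(1) by simp
    ultimately show ?thesis
      using 3 unfolding B
      by (simp add: leading_word_def trailing_word_def stable_suffix_def numeral_eq_Suc)
  qed
qed

lemma push_Y_syllable_after_Z:
  assumes "n \<noteq> 0" "prefix (leading_word (Z, m)) st" "stable_suffix s st"
  shows "prefix (leading_word (Y, n)) (foldr push_letter (phi_word (gpow Y n)) st)
       \<and> stable_suffix s (foldr push_letter (phi_word (gpow Y n)) st)"
proof (cases "0 < m")
  case True
  then obtain T where "st = [\<alpha>, \<alpha>, \<alpha>, \<alpha>, \<delta>] @ T"
    using assms(2) by (auto simp: leading_word_def prefix_def)
  then have "foldr push_letter (phi_word (gpow Y n)) st = (\<delta>' # gpow Alpha n @ [\<delta>]) @ st"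
    using assms(1) by (simp add: push_Y_syllable)
  then show ?thesis
    using stable_suffix_append[OF assms(3), of "\<delta>' # gpow Alpha n @ [\<delta>]"]
    by (simp add: leading_word_def)
next
  case False
  then obtain rest where st: "st = \<delta>' # rest" and "hd rest = \<delta>'"
    using assms(2) by (auto simp: leading_word_def prefix_def)
  then have "foldr push_letter (phi_word (gpow Y n)) st = (\<delta>' # gpow Alpha n) @ rest"
    by (simp add: push_Y_syllable_cancel)
  then show ?thesis
    using stable_suffix_append_cancel[of s rest "\<delta>' # gpow Alpha n"] assms(3) st
    by (simp add: leading_word_def)
qed

lemma push_Z_syllable_after_Y:
  assumes "n \<noteq> 0" "m \<noteq> 0" "prefix (leading_word (Y, m)) st" "stable_suffix s st"
  shows "prefix (leading_word (Z, n)) (foldr push_letter (phi_word (gpow Z n)) st)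
       \<and> stable_suffix s (foldr push_letter (phi_word (gpow Z n)) st)"
proof -
  obtain T where st: "st = \<delta>' # gpow Alpha m @ T"
    using assms(3) by (auto simp: leading_word_def prefix_def)
  obtain k where word:
    "phi_word (gpow Z n) = phi_letter (Z, 0 \<le> n) @ concat (replicate k (phi_letter (Z, 0 \<le> n)))"
    using phi_word_gpow_nonzero[OF assms(1)] by blast
  show ?thesis
  proof (cases "0 < n")
    case True
    have "hd (gpow Alpha m @ T) = (Alpha, 0 \<le> m)"
      using assms(2) by (simp add: gpow_eq_replicate hd_append)
    then have image: "foldr push_letter (phi_word (gpow Z n)) st = butlast (phi_word (gpow Z n)) @ gpow Alpha m @ T"
      using True st by (simp add: push_Z_syllable_cancel)
    have "prefix [\<alpha>, \<alpha>, \<alpha>, \<alpha>, \<delta>] (butlast (phi_word (gpow Z n)))"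
      using True word by (cases k) (simp_all add: butlast_append phi_letter_Z_pos)
    then show ?thesis
      using stable_suffix_append_cancel[of s "gpow Alpha m @ T" "butlast (phi_word (gpow Z n))"] assms(4) True st
      unfolding image by (auto simp: leading_word_def prefix_def)
  next
    case False
    then have image: "foldr push_letter (phi_word (gpow Z n)) st = phi_word (gpow Z n) @ st"
      using assms(1) st by (simp add: push_Z_neg_syllable)
    have "prefix [\<delta>', \<delta>', \<alpha>', \<alpha>', \<alpha>', \<alpha>'] (phi_word (gpow Z n))"
      using False assms(1) word by (simp add: phi_letter_Z_neg)
    then show ?thesis
      using stable_suffix_append[OF assms(4), of "phi_word (gpow Z n)"] False unfolding image
      by (auto simp: leading_word_def prefix_def)
  qed
qed

lemma push_alternating_syllable:
  assumes "g \<noteq> h" "n \<noteq> 0" "m \<noteq> 0"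
    and "prefix (leading_word (h, m)) st" "stable_suffix s st"
  shows "prefix (leading_word (g, n)) (foldr push_letter (phi_word (gpow g n)) st)
       \<and> stable_suffix s (foldr push_letter (phi_word (gpow g n)) st)"
  using assms push_Y_syllable_after_Z push_Z_syllable_after_Y by (cases g; cases h) auto

lemma reduced_image_alternating:
  assumes "ns \<noteq> []" "\<forall>p\<in>set ns. snd p \<noteq> 0" "successively (\<lambda>p q. fst p \<noteq> fst q) ns"
  shows "prefix (leading_word (hd ns)) (reduced_image ns)
       \<and> stable_suffix (trailing_word (last ns)) (reduced_image ns)"
  using assms
proof (induction ns rule: list_nonempty_induct)
  case (single p)
  then show ?case
    using reduced_image_single by (cases p) simp
next
  case (cons p ns)
  obtain g n h m where p: "p = (g, n)" and hd: "hd ns = (h, m)"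
    by (cases p, cases "hd ns")
  have "g \<noteq> h" "n \<noteq> 0" "m \<noteq> 0"
    using cons.hyps cons.prems p hd hd_in_set[of ns] by (auto simp: successively_Cons)
  moreover have "prefix (leading_word (h, m)) (reduced_image ns)"
    and "stable_suffix (trailing_word (last ns)) (reduced_image ns)"
    using cons by (auto simp: successively_Cons hd)
  ultimately show ?case
    using push_alternating_syllable cons.hyps by (simp add: p reduced_image_Cons)
qed

theorem mainTheorem9:
  fixes ns :: "(zy \<times> int) list"
  assumes "length ns \<ge> 1"
    and "\<forall>i < length ns. snd (ns ! i) \<noteq> 0"
    and "\<forall>i. Suc i < length ns \<longrightarrow> fst (ns ! i) \<noteq> fst (ns ! Suc i)"
  shows "(fst (last ns) = Z \<longrightarrow>
            suffix (gpow Delta (-1) @ gpow Alpha (-4)) (reduced_form (phi_word (syllables_word ns)))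
          \<or> suffix (gpow Alpha 4 @ gpow Delta 2) (reduced_form (phi_word (syllables_word ns))))
       \<and> (fst (last ns) = Y \<longrightarrow>
            (\<exists>n::int. n \<noteq> 0 \<and>
               suffix (gpow Alpha n @ gpow Delta 1) (reduced_form (phi_word (syllables_word ns)))))"
proof -
  have "ns \<noteq> []" "\<forall>p\<in>set ns. snd p \<noteq> 0" "successively (\<lambda>p q. fst p \<noteq> fst q) ns"
    using assms by (auto simp: all_set_conv_all_nth successively_conv_nth)
  then have "suffix (trailing_word (last ns)) (reduced_form (phi_word (syllables_word ns)))"
    and "snd (last ns) \<noteq> 0"
    using reduced_image_alternating by (auto simp: stable_suffix_def reduced_image_def)
  then show ?thesis
    by (cases "last ns") (auto simp: trailing_word_def split: zy.splits if_splits)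
qed

end
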